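(* For every Tychonoff space $X$, the following are equivalent: (1) $C_p(X)\models U_{fin}(\Gamma_f,\Gamma_f)$ for every $f\in C_p(X)$; (2) $X\models U_{fin}(\Gamma_F,\Gamma)$.
   Context: All spaces are Tychonoff; $C_p(X)$ is $C(X)$ with pointwise convergence topology. For $f\in C_p(X)$, $\Gamma_f$ is the family of infinite $A\subseteq C(X)$ with $f\notin A$ such that every neighbourhood of $f$ contains all but finitely many elements of $A$. $C_p(X)\models U_{fin}(\Gamma_f,\Gamma_f)$ means: for every sequence $(S_n)_{n\in\omega}$ of elements of $\Gamma_f$ there are finite $\mathcal F_n\subseteq S_n$ such that for every finite $K=\{x_1,\dots,x_k\}\subseteq X$ and $\varepsilon>0$ there is $n'$ such that for every $n>n'$ and each $j\le k$ some $g\in\mathcal F_n$ satisfies $|g(x_j)-f(x_j)|<\varepsilon$. Zero-set: $g^{-1}(0)$, $g\in C(X)$; cozero-set: its complement. A cover $\mathcal U$ of $X$ always means $X=\bigcup\mathcal U$, $X\notin\mathcal U$; $\gamma$-cover: infinite, each point in all but finitely many members. $\Gamma_F$: $\gamma$-covers $\mathcal U$ of $X$ by cozero-sets for which there are zero-sets $F(U)\subseteq U$ ($U\in\mathcal U$) with $\{F(U):U\in\mathcal U\}$ a $\gamma$-cover of $X$. $X\models U_{fin}(\Gamma_F,\Gamma)$: whenever $\mathcal U_n\in\Gamma_F$ ($n\in\omega$) and no $\mathcal U_n$ contains a finite subcover, there are finite $\mathcal F_n\subseteq\mathcal U_n$ such that each point of $X$ belongs to $\bigcup\mathcal F_n$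 for all but finitely many $n$. *)

theory Defs
  imports "HOL-Analysis.Analysis"
begin

definition tychonoff_space :: "'a topology \<Rightarrow> bool" where
  "tychonoff_space X \<longleftrightarrow> completely_regular_space X \<and> t1_space X"

text \<open>C(X): continuous real-valued functions on X, normalised to 0 outside the
  carrier so that distinct elements of C(X) are distinct functions on X.\<close>
definition Cfun :: "'a topology \<Rightarrow> ('a \<Rightarrow> real) set" where
  "Cfun X = {g. continuous_map X euclideanreal g \<and> (\<forall>x. x \<notin> topspace X \<longrightarrow> g x = 0)}"

definition cp_nbhd :: "'a topology \<Rightarrow> ('a \<Rightarrow> real) \<Rightarrow> 'a set \<Rightarrow> real \<Rightarrow> ('a \<Rightarrow> real) set" where
  "cp_nbhd X f K \<epsilon> = {g \<in> Cfun X. \<forall>x\<in>K. \<bar>g x - f x\<bar> < \<epsilon>}"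

text \<open>\<Gamma>_f: infinite A \<subseteq> C(X), f \<notin> A, converging to f in C_p(X)
  (every neighbourhood of f contains all but finitely many elements of A;
  it suffices to check the basic neighbourhoods).\<close>
definition Gamma_f :: "'a topology \<Rightarrow> ('a \<Rightarrow> real) \<Rightarrow> ('a \<Rightarrow> real) set set" where
  "Gamma_f X f = {A. A \<subseteq> Cfun X \<and> infinite A \<and> f \<notin> A \<and>
      (\<forall>K \<epsilon>. finite K \<and> K \<subseteq> topspace X \<and> \<epsilon> > 0 \<longrightarrow> finite (A - cp_nbhd X f K \<epsilon>))}"

definition Cp_Ufin_Gamma_f :: "'a topology \<Rightarrow> ('a \<Rightarrow> real) \<Rightarrow> bool" where
  "Cp_Ufin_Gamma_f X f \<longleftrightarrow>
     (\<forall>S :: nat \<Rightarrow> ('a \<Rightarrow> real) set. (\<forall>n. S n \<in> Gamma_f X f) \<longrightarrow>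
        (\<exists>F :: nat \<Rightarrow> ('a \<Rightarrow> real) set. (\<forall>n. finite (F n) \<and> F n \<subseteq> S n) \<and>
           (\<forall>K \<epsilon>. finite K \<and> K \<subseteq> topspace X \<and> \<epsilon> > 0 \<longrightarrow>
              (\<exists>n'. \<forall>n > n'. \<forall>x\<in>K. \<exists>g\<in>F n. \<bar>g x - f x\<bar> < \<epsilon>))))"

definition zero_set :: "'a topology \<Rightarrow> 'a set \<Rightarrow> bool" where
  "zero_set X Z \<longleftrightarrow> (\<exists>g. continuous_map X euclideanreal g \<and> Z = {x \<in> topspace X. g x = 0})"

definition cozero_set :: "'a topology \<Rightarrow> 'a set \<Rightarrow> bool" where
  "cozero_set X U \<longleftrightarrow> (\<exists>g. continuous_map X euclideanreal g \<and> U = {x \<in> topspace X. g x \<noteq> 0})"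

definition is_cover :: "'a topology \<Rightarrow> 'a set set \<Rightarrow> bool" where
  "is_cover X \<U> \<longleftrightarrow> \<Union>\<U> = topspace X \<and> topspace X \<notin> \<U>"

definition gamma_cover :: "'a topology \<Rightarrow> 'a set set \<Rightarrow> bool" where
  "gamma_cover X \<U> \<longleftrightarrow> is_cover X \<U> \<and> infinite \<U> \<and>
     (\<forall>x\<in>topspace X. finite {U \<in> \<U>. x \<notin> U})"

definition Gamma_F :: "'a topology \<Rightarrow> 'a set set set" where
  "Gamma_F X = {\<U>. gamma_cover X \<U> \<and> (\<forall>U\<in>\<U>. cozero_set X U) \<and>
     (\<exists>F. (\<forall>U\<in>\<U>. zero_set X (F U) \<and> F U \<subseteq> U) \<and> gamma_cover X (F ` \<U>))}"

definition Ufin_GammaF_Gamma :: "'a topology \<Rightarrow> bool" where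
  "Ufin_GammaF_Gamma X \<longleftrightarrow>
     (\<forall>\<U> :: nat \<Rightarrow> 'a set set.
        (\<forall>n. \<U> n \<in> Gamma_F X \<and> \<not> (\<exists>\<V>. finite \<V> \<and> \<V> \<subseteq> \<U> n \<and> \<Union>\<V> = topspace X)) \<longrightarrow>
        (\<exists>\<F> :: nat \<Rightarrow> 'a set set. (\<forall>n. finite (\<F> n) \<and> \<F> n \<subseteq> \<U> n) \<and>
           (\<forall>x\<in>topspace X. finite {n. x \<notin> \<Union>(\<F> n)})))"

end

theory Submission
  imports Defs
begin

text \<open>
  If \<open>\<U> \<in> \<Gamma>_F\<close> with zero-sets \<open>F(U) \<subseteq> U\<close>, the functions \<open>\<phi>\<^sub>U\<close> that vanish on \<open>F(U)\<close> and
  equal \<open>1\<close> off \<open>U\<close> converge to \<open>0\<close> in \<open>C\<^sub>p(X)\<close>, because \<open>{F(U)}\<close> is a \<open>\<gamma>\<close>-cover; a finite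
  selection from them that is eventually below \<open>1\<close> at each point names finitely many members
  of each cover that eventually contain that point. Conversely, for \<open>S\<^sub>n \<in> \<Gamma>_f\<close> the sets
  \<open>{x. \<bar>g x - f x\<bar> < 1/(n+1)}\<close>, \<open>g \<in> S\<^sub>n\<close>, either have a finite subcover or form a member of
  \<open>\<Gamma>_F\<close>, the zero-sets being given by the bound \<open>1/(2(n+1))\<close>; a selection of sets that
  eventually covers each point yields finitely many functions eventually close to \<open>f\<close>.
\<close>

lemma restrict_continuous_in_Cfun:
  assumes "continuous_map X euclideanreal g"
  shows "(\<lambda>x. if x \<in> topspace X then g x else 0) \<in> Cfun X"
  using continuous_map_eq[OF assms, of "\<lambda>x. if x \<in> topspace X then g x else 0"]
  unfolding Cfun_def by simp

lemma cozero_set_less: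
  assumes "continuous_map X euclideanreal h"
  shows "cozero_set X {x \<in> topspace X. h x < c}"
proof -
  have "continuous_map X euclideanreal (\<lambda>x. max (c - h x) 0)"
    using assms by (intro continuous_intros)
  moreover have "{x \<in> topspace X. h x < c} = {x \<in> topspace X. max (c - h x) 0 \<noteq> 0}"
    by auto
  ultimately show ?thesis unfolding cozero_set_def by blast
qed

lemma zero_set_le:
  assumes "continuous_map X euclideanreal h"
  shows "zero_set X {x \<in> topspace X. h x \<le> c}"
proof -
  have "continuous_map X euclideanreal (\<lambda>x. max (h x - c) 0)"
    using assms by (intro continuous_intros)
  moreover have "{x \<in> topspace X. h x \<le> c} = {x \<in> topspace X. max (h x - c) 0 = 0}"
    by (auto simp: max_def)
  ultimately show ?thesis unfolding zero_set_def by blast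
qed

lemma zero_cozero_separation:
  assumes "zero_set X Z" "cozero_set X U" "Z \<subseteq> U"
  shows "\<exists>\<phi>\<in>Cfun X. (\<forall>x\<in>Z. \<phi> x = 0) \<and> (\<forall>x\<in>topspace X - U. \<phi> x = 1)"
proof -
  obtain h where h: "continuous_map X euclideanreal h" "Z = {x \<in> topspace X. h x = 0}"
    using assms(1) unfolding zero_set_def by blast
  obtain k where k: "continuous_map X euclideanreal k" "U = {x \<in> topspace X. k x \<noteq> 0}"
    using assms(2) unfolding cozero_set_def by blast
  have denom: "\<bar>h x\<bar> + \<bar>k x\<bar> \<noteq> 0" if "x \<in> topspace X" for x
    using that assms(3) h(2) k(2) by auto
  define \<phi> where "\<phi> x = \<bar>h x\<bar> / (\<bar>h x\<bar> + \<bar>k x\<bar>)" for x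
  have "continuous_map X euclideanreal \<phi>"
    unfolding \<phi>_def using h(1) k(1) denom by (intro continuous_intros) auto
  moreover have "\<phi> x = 0" if "x \<in> Z" for x
    using that h(2) by (simp add: \<phi>_def)
  moreover have "\<phi> x = 1" if "x \<in> topspace X - U" for x
    using that k(2) denom[of x] by (auto simp: \<phi>_def)
  ultimately show ?thesis
    using h(2) by (intro bexI[OF _ restrict_continuous_in_Cfun]) auto
qed

lemma Gamma_f_zero_if_finite_support:
  assumes "S \<subseteq> Cfun X" "infinite S" "(\<lambda>_. 0) \<notin> S"
    and "\<And>x. x \<in> topspace X \<Longrightarrow> finite {g \<in> S. g x \<noteq> 0}"
  shows "S \<in> Gamma_f X (\<lambda>_. 0)"
proof -
  have "finite (S - cp_nbhd X (\<lambda>_. 0) K \<epsilon>)" if "finite K" "K \<subseteq> topspace X" "\<epsilon> > 0" for K \<epsilon>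
  proof (rule finite_subset)
    show "S - cp_nbhd X (\<lambda>_. 0) K \<epsilon> \<subseteq> (\<Union>x\<in>K. {g \<in> S. g x \<noteq> 0})"
      using assms(1) that(3) unfolding cp_nbhd_def by force
    show "finite (\<Union>x\<in>K. {g \<in> S. g x \<noteq> 0})"
      using that assms(4) by blast
  qed
  then show ?thesis
    using assms unfolding Gamma_f_def by blast
qed

lemma Gamma_f_zero_vanishing_family:
  assumes \<V>: "gamma_cover X \<V>"
    and \<phi>: "\<And>V. V \<in> \<V> \<Longrightarrow> \<phi> V \<in> Cfun X \<and> (\<forall>x\<in>V. \<phi> V x = 0) \<and> (\<exists>x\<in>topspace X. \<phi> V x \<noteq> 0)"
  shows "\<phi> ` \<V> \<in> Gamma_f X (\<lambda>_. 0)"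
proof (rule Gamma_f_zero_if_finite_support)
  have fin: "finite {V \<in> \<V>. x \<notin> V}" if "x \<in> topspace X" for x
    using \<V> that unfolding gamma_cover_def by blast
  show "finite {g \<in> \<phi> ` \<V>. g x \<noteq> 0}" if "x \<in> topspace X" for x
  proof (rule finite_subset)
    show "{g \<in> \<phi> ` \<V>. g x \<noteq> 0} \<subseteq> \<phi> ` {V \<in> \<V>. x \<notin> V}"
      using \<phi> by fastforce
  qed (use fin[OF that] in blast)
  show "infinite (\<phi> ` \<V>)"
  proof
    assume finite: "finite (\<phi> ` \<V>)"
    have "\<forall>g\<in>\<phi> ` \<V>. \<exists>x. x \<in> topspace X \<and> g x \<noteq> 0"
      using \<phi> by blast
    then obtain w where w: "\<And>g. g \<in> \<phi> ` \<V> \<Longrightarrow> w g \<in> topspace X \<and> g (w g) \<noteq> 0"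
      by (metis bchoice)
    \<comment> \<open>every member of \<open>\<V>\<close> misses one of the finitely many points \<open>w g\<close>\<close>
    have "\<V> \<subseteq> (\<Union>g\<in>\<phi> ` \<V>. {V \<in> \<V>. w g \<notin> V})"
      using w \<phi> by fastforce
    moreover have "finite (\<Union>g\<in>\<phi> ` \<V>. {V \<in> \<V>. w g \<notin> V})"
      using finite fin w by blast
    ultimately show False
      using \<V> finite_subset unfolding gamma_cover_def by blast
  qed
  show "\<phi> ` \<V> \<subseteq> Cfun X"
    using \<phi> by blast
  show "(\<lambda>_. 0) \<notin> \<phi> ` \<V>"
  proof
    assume "(\<lambda>_. 0) \<in> \<phi> ` \<V>"
    then obtain V where "V \<in> \<V>" "\<phi> V = (\<lambda>_. 0)" by force
    then show False using \<phi> by fastforce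
  qed
qed

lemma Gamma_F_imp_Gamma_f_zero:
  assumes "\<U> \<in> Gamma_F X"
  shows "\<exists>S G. S \<in> Gamma_f X (\<lambda>_. 0) \<and> (\<forall>g\<in>S. G g \<in> \<U> \<and> {x \<in> topspace X. g x < 1} \<subseteq> G g)"
proof -
  obtain F where \<U>: "gamma_cover X \<U>" "\<forall>U\<in>\<U>. cozero_set X U"
    and F: "\<forall>U\<in>\<U>. zero_set X (F U) \<and> F U \<subseteq> U" "gamma_cover X (F ` \<U>)"
    using assms unfolding Gamma_F_def by blast
  define rep where "rep = inv_into \<U> F"
  have rep: "rep V \<in> \<U>" "F (rep V) = V" if "V \<in> F ` \<U>" for V
    using that by (simp_all add: rep_def inv_into_into f_inv_into_f)
  have proper: "\<exists>x\<in>topspace X. x \<notin> U" if "U \<in> \<U>" for U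
  proof -
    have "U \<subseteq> topspace X" "U \<noteq> topspace X"
      using that \<U>(1) unfolding gamma_cover_def is_cover_def by auto
    then show ?thesis by blast
  qed
  have "\<exists>\<psi>\<in>Cfun X. (\<forall>x\<in>V. \<psi> x = 0) \<and> (\<forall>x\<in>topspace X - rep V. \<psi> x = 1)"
    if "V \<in> F ` \<U>" for V
  proof (rule zero_cozero_separation)
    show "zero_set X V" "V \<subseteq> rep V"
      using F(1) rep[OF that] by metis+
    show "cozero_set X (rep V)"
      using \<U>(2) rep[OF that] by blast
  qed
  then have "\<forall>V\<in>F ` \<U>. \<exists>\<psi>. \<psi> \<in> Cfun X \<and> (\<forall>x\<in>V. \<psi> x = 0) \<and> (\<forall>x\<in>topspace X - rep V. \<psi> x = 1)"
    by blast
  from bchoice[OF this] obtain \<phi> where \<phi>: "\<forall>V\<in>F ` \<U>.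
      \<phi> V \<in> Cfun X \<and> (\<forall>x\<in>V. \<phi> V x = 0) \<and> (\<forall>x\<in>topspace X - rep V. \<phi> V x = 1)" ..
  have Gamma: "\<phi> ` F ` \<U> \<in> Gamma_f X (\<lambda>_. 0)"
  proof (rule Gamma_f_zero_vanishing_family[OF F(2)])
    fix V assume V: "V \<in> F ` \<U>"
    then obtain x where x: "x \<in> topspace X - rep V"
      using proper rep by blast
    have sep: "\<phi> V \<in> Cfun X \<and> (\<forall>x\<in>V. \<phi> V x = 0) \<and> (\<forall>x\<in>topspace X - rep V. \<phi> V x = 1)"
      using \<phi> V by (rule bspec)
    then have "\<phi> V x = 1"
      using x by blast
    then have "\<exists>x\<in>topspace X. \<phi> V x \<noteq> 0"
      using x by (intro bexI[of _ x]) auto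
    with sep show "\<phi> V \<in> Cfun X \<and> (\<forall>x\<in>V. \<phi> V x = 0) \<and> (\<exists>x\<in>topspace X. \<phi> V x \<noteq> 0)"
      by blast
  qed
  define G where "G g = rep (inv_into (F ` \<U>) \<phi> g)" for g
  have "G g \<in> \<U> \<and> {x \<in> topspace X. g x < 1} \<subseteq> G g" if "g \<in> \<phi> ` F ` \<U>" for g
  proof -
    define V where "V = inv_into (F ` \<U>) \<phi> g"
    have V: "V \<in> F ` \<U>" "\<phi> V = g"
      using that by (simp_all add: V_def inv_into_into f_inv_into_f)
    have "g x = 1" if "x \<in> topspace X - rep V" for x
      using \<phi> V that by blast
    then have "{x \<in> topspace X. g x < 1} \<subseteq> rep V"
      by fastforce
    then show ?thesis
      using rep(1)[OF V(1)] by (simp add: G_def V_def)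
  qed
  with Gamma show ?thesis
    by (intro exI[of _ "\<phi> ` F ` \<U>"] exI[of _ G] conjI) blast+
qed

lemma Gamma_F_sequence_imp_Gamma_f_zero_sequence:
  assumes "\<And>n. \<U> n \<in> Gamma_F X"
  shows "\<exists>S G. \<forall>n. S n \<in> Gamma_f X (\<lambda>_. 0) \<and>
           (\<forall>g\<in>S n. G n g \<in> \<U> n \<and> {x \<in> topspace X. g x < 1} \<subseteq> G n g)"
proof -
  have "\<forall>n. \<exists>S G. S \<in> Gamma_f X (\<lambda>_. 0) \<and>
          (\<forall>g\<in>S. G g \<in> \<U> n \<and> {x \<in> topspace X. g x < 1} \<subseteq> G g)"
    using Gamma_F_imp_Gamma_f_zero[OF assms] by (rule allI)
  then have "\<exists>S. \<forall>n. \<exists>G. S n \<in> Gamma_f X (\<lambda>_. 0) \<and>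
          (\<forall>g\<in>S n. G g \<in> \<U> n \<and> {x \<in> topspace X. g x < 1} \<subseteq> G g)"
    by (rule choice)
  then obtain S where "\<forall>n. \<exists>G. S n \<in> Gamma_f X (\<lambda>_. 0) \<and>
          (\<forall>g\<in>S n. G g \<in> \<U> n \<and> {x \<in> topspace X. g x < 1} \<subseteq> G g)" ..
  then have "\<exists>G. \<forall>n. S n \<in> Gamma_f X (\<lambda>_. 0) \<and>
          (\<forall>g\<in>S n. G n g \<in> \<U> n \<and> {x \<in> topspace X. g x < 1} \<subseteq> G n g)"
    by (rule choice)
  then show ?thesis
    by (rule exI[of _ S])
qed

lemma Cp_Ufin_Gamma_f_imp_Ufin_GammaF_Gamma:
  assumes "Cp_Ufin_Gamma_f X (\<lambda>_. 0)"
  shows "Ufin_GammaF_Gamma X"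
  unfolding Ufin_GammaF_Gamma_def
proof (intro allI impI)
  fix \<U> :: "nat \<Rightarrow> 'a set set"
  assume \<U>: "\<forall>n. \<U> n \<in> Gamma_F X \<and> \<not> (\<exists>\<V>. finite \<V> \<and> \<V> \<subseteq> \<U> n \<and> \<Union>\<V> = topspace X)"
  have "\<U> n \<in> Gamma_F X" for n
    using spec[OF \<U>, of n] by (rule conjunct1)
  from Gamma_F_sequence_imp_Gamma_f_zero_sequence[of \<U> X, OF this]
  obtain S G where SG: "\<forall>n. S n \<in> Gamma_f X (\<lambda>_. 0) \<and>
          (\<forall>g\<in>S n. G n g \<in> \<U> n \<and> {x \<in> topspace X. g x < 1} \<subseteq> G n g)"
    by blast
  have G: "G n g \<in> \<U> n" and G_sub: "{x \<in> topspace X. g x < 1} \<subseteq> G n g" if "g \<in> S n" for n g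
    using bspec[OF SG[THEN spec, THEN conjunct2] that] by simp_all
  from SG have "\<forall>n. S n \<in> Gamma_f X (\<lambda>_. 0)"
    by simp
  then have "\<exists>F. (\<forall>n. finite (F n) \<and> F n \<subseteq> S n) \<and>
           (\<forall>K \<epsilon>. finite K \<and> K \<subseteq> topspace X \<and> \<epsilon> > 0 \<longrightarrow>
              (\<exists>n'. \<forall>n > n'. \<forall>x\<in>K. \<exists>g\<in>F n. \<bar>g x - 0\<bar> < \<epsilon>))"
    by (rule mp[OF spec[where x=S, OF assms[unfolded Cp_Ufin_Gamma_f_def]]])
  then obtain F where "(\<forall>n. finite (F n) \<and> F n \<subseteq> S n) \<and>
           (\<forall>K \<epsilon>. finite K \<and> K \<subseteq> topspace X \<and> \<epsilon> > 0 \<longrightarrow>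
              (\<exists>n'. \<forall>n > n'. \<forall>x\<in>K. \<exists>g\<in>F n. \<bar>g x - 0\<bar> < \<epsilon>))" ..
  note F = conjunct1[OF this] and conv = conjunct2[OF this]
  have "finite {n. x \<notin> \<Union>(G n ` F n)}" if x: "x \<in> topspace X" for x
  proof -
    have "finite {x} \<and> {x} \<subseteq> topspace X \<and> (1::real) > 0"
      using x by simp
    from conv[rule_format, OF this]
    obtain n' where n': "\<forall>n > n'. \<forall>y\<in>{x}. \<exists>g\<in>F n. \<bar>g y - 0\<bar> < 1" ..
    have covered: "x \<in> \<Union>(G n ` F n)" if "n > n'" for n
    proof -
      have "\<exists>g\<in>F n. \<bar>g x - 0\<bar> < 1"
        using n' that by blast
      then obtain g where g: "g \<in> F n" "\<bar>g x - 0\<bar> < 1" ..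
      then have "g \<in> S n"
        using F by blast
      then have "x \<in> G n g"
        using G_sub[OF \<open>g \<in> S n\<close>] x g(2) by auto
      then show ?thesis
        by (rule UN_I[OF g(1)])
    qed
    have "{n. x \<notin> \<Union>(G n ` F n)} \<subseteq> {..n'}"
    proof
      fix n assume "n \<in> {n. x \<notin> \<Union>(G n ` F n)}"
      then have "\<not> n > n'"
        using covered by blast
      then show "n \<in> {..n'}"
        by simp
    qed
    then show ?thesis
      by (rule finite_subset) simp
  qed
  moreover have "finite (G n ` F n) \<and> G n ` F n \<subseteq> \<U> n" for n
    using F G by auto
  ultimately show "\<exists>\<F>. (\<forall>n. finite (\<F> n) \<and> \<F> n \<subseteq> \<U> n) \<and>
                       (\<forall>x\<in>topspace X. finite {n. x \<notin> \<Union>(\<F> n)})"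
    by (intro exI[of _ "\<lambda>n. G n ` F n"]) simp
qed

definition near_set :: "'a topology \<Rightarrow> ('a \<Rightarrow> real) \<Rightarrow> real \<Rightarrow> ('a \<Rightarrow> real) \<Rightarrow> 'a set" where
  "near_set X f r g = {x \<in> topspace X. \<bar>g x - f x\<bar> < r}"

lemma Gamma_f_finite_far:
  assumes "S \<in> Gamma_f X f" "x \<in> topspace X" "e > 0"
  shows "finite {g \<in> S. e \<le> \<bar>g x - f x\<bar>}"
proof (rule finite_subset)
  show "{g \<in> S. e \<le> \<bar>g x - f x\<bar>} \<subseteq> S - cp_nbhd X f {x} e"
    unfolding cp_nbhd_def by auto
  show "finite (S - cp_nbhd X f {x} e)"
    using assms unfolding Gamma_f_def by simp
qed

lemma gamma_cover_imageI:
  assumes sub: "\<And>g. g \<in> S \<Longrightarrow> A g \<subseteq> topspace X" and "infinite S"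
    and far: "\<And>x. x \<in> topspace X \<Longrightarrow> finite {g \<in> S. x \<notin> A g}"
    and no_subcover: "\<not> (\<exists>\<V>. finite \<V> \<and> \<V> \<subseteq> A ` S \<and> \<Union>\<V> = topspace X)"
  shows "gamma_cover X (A ` S)"
proof -
  have "topspace X \<subseteq> \<Union>(A ` S)"
  proof
    fix x assume "x \<in> topspace X"
    then have "\<not> S \<subseteq> {g \<in> S. x \<notin> A g}"
      using far \<open>infinite S\<close> finite_subset by blast
    then show "x \<in> \<Union>(A ` S)" by blast
  qed
  with sub have cover: "\<Union>(A ` S) = topspace X" by blast
  have "topspace X \<notin> A ` S"
  proof
    assume "topspace X \<in> A ` S"
    then have "\<exists>\<V>. finite \<V> \<and> \<V> \<subseteq> A ` S \<and> \<Union>\<V> = topspace X"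
      by (intro exI[of _ "{topspace X}"]) simp
    with no_subcover show False by contradiction
  qed
  moreover have "infinite (A ` S)"
    using no_subcover cover by blast
  moreover have "finite {U \<in> A ` S. x \<notin> U}" if "x \<in> topspace X" for x
  proof (rule finite_subset)
    show "{U \<in> A ` S. x \<notin> U} \<subseteq> A ` {g \<in> S. x \<notin> A g}" by blast
  qed (use far[OF that] in blast)
  ultimately show ?thesis
    using cover unfolding gamma_cover_def is_cover_def by blast
qed

lemma finite_subcover_image_mono:
  assumes "finite \<V>" "\<V> \<subseteq> B ` S" "\<Union>\<V> = T"
    and "\<And>g. g \<in> S \<Longrightarrow> B g \<subseteq> A g" "\<And>g. g \<in> S \<Longrightarrow> A g \<subseteq> T"
  shows "\<exists>\<W>. finite \<W> \<and> \<W> \<subseteq> A ` S \<and> \<Union>\<W> = T"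
proof -
  obtain S0 where S0: "finite S0" "S0 \<subseteq> S" "\<V> = B ` S0"
    using finite_subset_image[OF assms(1,2)] by blast
  have "\<Union>(A ` S0) = T"
    using S0 assms(3-5) by blast
  then show ?thesis
    using S0 by (intro exI[of _ "A ` S0"]) auto
qed

lemma Gamma_F_imageI:
  assumes "gamma_cover X (A ` S)" "gamma_cover X (B ` inv_into S A ` A ` S)"
    and "\<And>g. g \<in> S \<Longrightarrow> cozero_set X (A g)" "\<And>g. g \<in> S \<Longrightarrow> zero_set X (B g)"
    and "\<And>g. B g \<subseteq> A g"
  shows "A ` S \<in> Gamma_F X"
proof -
  \<comment> \<open>\<open>A\<close> need not be injective: each member of the cover gets the zero-set of one fixed representative\<close>
  define F where "F U = B (inv_into S A U)" for U
  have "F ` A ` S = B ` inv_into S A ` A ` S"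
    by (simp add: F_def image_comp)
  moreover have "cozero_set X U \<and> zero_set X (F U) \<and> F U \<subseteq> U" if "U \<in> A ` S" for U
  proof -
    define g where "g = inv_into S A U"
    have "g \<in> S" "A g = U"
      using that by (simp_all add: g_def inv_into_into f_inv_into_f)
    then show ?thesis
      using assms(3-5)[of g] by (simp add: F_def g_def)
  qed
  ultimately show ?thesis
    using assms(1,2) unfolding Gamma_F_def by (intro CollectI conjI exI[of _ F]) auto
qed

lemma Gamma_f_near_sets_Gamma_F:
  assumes f: "f \<in> Cfun X" and S: "S \<in> Gamma_f X f" and "r > 0"
    and no_subcover: "\<not> (\<exists>\<V>. finite \<V> \<and> \<V> \<subseteq> near_set X f r ` S \<and> \<Union>\<V> = topspace X)"
  shows "near_set X f r ` S \<in> Gamma_F X"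
proof -
  define A where "A = near_set X f r"
  define B where "B g = {x \<in> topspace X. \<bar>g x - f x\<bar> \<le> r / 2}" for g
  define S' where "S' = inv_into S A ` A ` S"
  have cont: "continuous_map X euclideanreal (\<lambda>x. \<bar>g x - f x\<bar>)" if "g \<in> S" for g
    using that S f unfolding Gamma_f_def Cfun_def by (auto intro!: continuous_intros)
  have BA: "B g \<subseteq> A g" for g
    using \<open>r > 0\<close> by (auto simp: A_def B_def near_set_def)
  have A_sub: "A g \<subseteq> topspace X" for g
    by (simp add: A_def near_set_def)
  have far: "finite {g \<in> S. x \<notin> A g}" if "x \<in> topspace X" for x
    using Gamma_f_finite_far[OF S that \<open>r > 0\<close>]
    by (rule finite_subset[rotated]) (auto simp: A_def near_set_def that)
  have S'_sub: "S' \<subseteq> S"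
    unfolding S'_def by (auto intro!: inv_into_into)
  have AS': "A ` S' = A ` S"
    unfolding S'_def by (rule image_inv_into_cancel) auto
  have infinite: "infinite S"
    using S unfolding Gamma_f_def by blast
  have gamma_A: "gamma_cover X (A ` S)"
    using A_sub infinite far no_subcover unfolding A_def by (rule gamma_cover_imageI)
  have gamma_B: "gamma_cover X (B ` S')"
  proof (rule gamma_cover_imageI)
    show "B g \<subseteq> topspace X" for g
      by (simp add: B_def)
    show "infinite S'"
      using gamma_A AS' unfolding gamma_cover_def by (metis finite_imageI)
    show "finite {g \<in> S'. x \<notin> B g}" if "x \<in> topspace X" for x
    proof (rule finite_subset)
      show "{g \<in> S'. x \<notin> B g} \<subseteq> {g \<in> S. r / 2 \<le> \<bar>g x - f x\<bar>}"
        using S'_sub that by (auto simp: B_def)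
      show "finite {g \<in> S. r / 2 \<le> \<bar>g x - f x\<bar>}"
        by (rule Gamma_f_finite_far[OF S that]) (use \<open>r > 0\<close> in simp)
    qed
    show "\<not> (\<exists>\<V>. finite \<V> \<and> \<V> \<subseteq> B ` S' \<and> \<Union>\<V> = topspace X)"
      using finite_subcover_image_mono[of _ B S' "topspace X" A] BA A_sub AS' no_subcover
      unfolding A_def by metis
  qed
  have "A ` S \<in> Gamma_F X"
  proof (rule Gamma_F_imageI[OF gamma_A gamma_B[unfolded S'_def]])
    show "cozero_set X (A g)" if "g \<in> S" for g
      using cozero_set_less[OF cont[OF that], of r] by (simp add: A_def near_set_def)
    show "zero_set X (B g)" if "g \<in> S" for g
      using zero_set_le[OF cont[OF that], of "r / 2"] by (simp add: B_def)
  qed (rule BA)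
  then show ?thesis
    by (simp add: A_def)
qed

lemma Ufin_GammaF_Gamma_restrict:
  fixes N :: "nat set"
  assumes U: "Ufin_GammaF_Gamma X"
    and N: "\<And>n. n \<in> N \<Longrightarrow>
              \<U> n \<in> Gamma_F X \<and> \<not> (\<exists>\<V>. finite \<V> \<and> \<V> \<subseteq> \<U> n \<and> \<Union>\<V> = topspace X)"
  shows "\<exists>\<F>. (\<forall>n\<in>N. finite (\<F> n) \<and> \<F> n \<subseteq> \<U> n) \<and>
             (\<forall>x\<in>topspace X. finite {n \<in> N. x \<notin> \<Union>(\<F> n)})"
proof (cases "finite N")
  case True
  then show ?thesis
    by (intro exI[of _ "\<lambda>_. {}"]) auto
next
  case False
  \<comment> \<open>pad the sequence by repeating members indexed by \<open>N\<close>; on \<open>N\<close> itself \<open>\<sigma>\<close> is the identity\<close>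
  define \<sigma> where "\<sigma> n = (LEAST m. m \<in> N \<and> n \<le> m)" for n
  have "\<exists>m. m \<in> N \<and> n \<le> m" for n
    using False infinite_nat_iff_unbounded_le by blast
  then have \<sigma>: "\<sigma> n \<in> N \<and> n \<le> \<sigma> n" for n
    unfolding \<sigma>_def by (rule LeastI_ex)
  have \<sigma>_id: "\<sigma> n = n" if "n \<in> N" for n
    using \<sigma>[of n] Least_le[of "\<lambda>m. m \<in> N \<and> n \<le> m" n] that by (simp add: \<sigma>_def)
  have "\<forall>n. \<U> (\<sigma> n) \<in> Gamma_F X \<and> \<not> (\<exists>\<V>. finite \<V> \<and> \<V> \<subseteq> \<U> (\<sigma> n) \<and> \<Union>\<V> = topspace X)"
    by (intro allI N) (simp add: \<sigma>)
  then have "\<exists>\<F>. (\<forall>n. finite (\<F> n) \<and> \<F> n \<subseteq> \<U> (\<sigma> n)) \<and>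
                  (\<forall>x\<in>topspace X. finite {n. x \<notin> \<Union>(\<F> n)})"
    by (rule mp[OF spec[where x="\<lambda>n. \<U> (\<sigma> n)", OF U[unfolded Ufin_GammaF_Gamma_def]]])
  then obtain \<F> where \<F>: "\<forall>n. finite (\<F> n) \<and> \<F> n \<subseteq> \<U> (\<sigma> n)"
    and fin: "\<forall>x\<in>topspace X. finite {n. x \<notin> \<Union>(\<F> n)}"
    by blast
  have "finite (\<F> n) \<and> \<F> n \<subseteq> \<U> n" if "n \<in> N" for n
    using \<F> \<sigma>_id[OF that] by metis
  moreover have "finite {n \<in> N. x \<notin> \<Union>(\<F> n)}" if "x \<in> topspace X" for x
    using fin that by (auto elim: rev_finite_subset)
  ultimately show ?thesis
    by (intro exI[of _ \<F>]) simp
qed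

lemma Ufin_GammaF_Gamma_allowing_finite_subcovers:
  fixes \<U> :: "nat \<Rightarrow> 'a set set"
  assumes U: "Ufin_GammaF_Gamma X"
    and \<U>: "\<And>n. \<U> n \<in> Gamma_F X \<or> (\<exists>\<V>. finite \<V> \<and> \<V> \<subseteq> \<U> n \<and> \<Union>\<V> = topspace X)"
  shows "\<exists>\<F>. (\<forall>n. finite (\<F> n) \<and> \<F> n \<subseteq> \<U> n) \<and> (\<forall>x\<in>topspace X. finite {n. x \<notin> \<Union>(\<F> n)})"
proof -
  define N where "N = {n. \<not> (\<exists>\<V>. finite \<V> \<and> \<V> \<subseteq> \<U> n \<and> \<Union>\<V> = topspace X)}"
  have "\<forall>n. \<exists>\<V>. n \<notin> N \<longrightarrow> finite \<V> \<and> \<V> \<subseteq> \<U> n \<and> \<Union>\<V> = topspace X"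
    unfolding N_def by blast
  then obtain C where C: "\<forall>n. n \<notin> N \<longrightarrow> finite (C n) \<and> C n \<subseteq> \<U> n \<and> \<Union>(C n) = topspace X"
    by (rule choice[THEN exE])
  have "\<U> n \<in> Gamma_F X \<and> \<not> (\<exists>\<V>. finite \<V> \<and> \<V> \<subseteq> \<U> n \<and> \<Union>\<V> = topspace X)"
    if "n \<in> N" for n
  proof -
    have "\<not> (\<exists>\<V>. finite \<V> \<and> \<V> \<subseteq> \<U> n \<and> \<Union>\<V> = topspace X)"
      using that unfolding N_def by (rule CollectD)
    then show ?thesis
      using \<U>[of n] by metis
  qed
  from Ufin_GammaF_Gamma_restrict[where N=N and \<U>=\<U>, OF U this]
  obtain \<F> where "(\<forall>n\<in>N. finite (\<F> n) \<and> \<F> n \<subseteq> \<U> n) \<and>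
                   (\<forall>x\<in>topspace X. finite {n \<in> N. x \<notin> \<Union>(\<F> n)})" ..
  note \<F> = conjunct1[OF this] and fin = conjunct2[OF this]
  define \<F>' where "\<F>' n = (if n \<in> N then \<F> n else C n)" for n
  have "finite (\<F>' n) \<and> \<F>' n \<subseteq> \<U> n" for n
    using \<F> C by (simp add: \<F>'_def)
  moreover have "finite {n. x \<notin> \<Union>(\<F>' n)}" if "x \<in> topspace X" for x
  proof (rule finite_subset)
    show "{n. x \<notin> \<Union>(\<F>' n)} \<subseteq> {n \<in> N. x \<notin> \<Union>(\<F> n)}"
    proof (intro subsetI CollectI conjI)
      fix n assume n: "n \<in> {n. x \<notin> \<Union>(\<F>' n)}"
      show "n \<in> N"
      proof (rule ccontr)
        assume "n \<notin> N"
        then have "x \<in> \<Union>(\<F>' n)"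
          using C that by (simp add: \<F>'_def)
        with n show False by simp
      qed
      with n show "x \<notin> \<Union>(\<F> n)"
        by (simp add: \<F>'_def)
    qed
  qed (use fin that in blast)
  ultimately show ?thesis
    by (intro exI[of _ \<F>']) simp
qed

lemma Ufin_GammaF_Gamma_imp_Cp_Ufin_Gamma_f:
  assumes U: "Ufin_GammaF_Gamma X" and f: "f \<in> Cfun X"
  shows "Cp_Ufin_Gamma_f X f"
  unfolding Cp_Ufin_Gamma_f_def
proof (intro allI impI)
  fix S :: "nat \<Rightarrow> ('a \<Rightarrow> real) set"
  assume S: "\<forall>n. S n \<in> Gamma_f X f"
  define r :: "nat \<Rightarrow> real" where "r n = 1 / real (Suc n)" for n
  define \<U> where "\<U> n = near_set X f (r n) ` S n" for n
  have "\<U> n \<in> Gamma_F X \<or> (\<exists>\<V>. finite \<V> \<and> \<V> \<subseteq> \<U> n \<and> \<Union>\<V> = topspace X)" for n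
    using Gamma_f_near_sets_Gamma_F[OF f spec[OF S, of n], of "r n"]
    unfolding \<U>_def r_def by (metis of_nat_0_less_iff zero_less_Suc zero_less_divide_1_iff)
  from Ufin_GammaF_Gamma_allowing_finite_subcovers[OF U this]
  obtain \<F> where "(\<forall>n. finite (\<F> n) \<and> \<F> n \<subseteq> \<U> n) \<and>
                   (\<forall>x\<in>topspace X. finite {n. x \<notin> \<Union>(\<F> n)})" ..
  note \<F> = conjunct1[OF this] and eventually_covered = conjunct2[OF this]
  have "\<forall>n. \<exists>G. G \<subseteq> S n \<and> finite G \<and> \<F> n = near_set X f (r n) ` G"
    using \<F> finite_subset_image unfolding \<U>_def by metis
  then obtain F where F: "\<forall>n. F n \<subseteq> S n \<and> finite (F n) \<and> \<F> n = near_set X f (r n) ` F n"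
    by (rule choice[THEN exE])
  have "\<exists>n'. \<forall>n > n'. \<forall>x\<in>K. \<exists>g\<in>F n. \<bar>g x - f x\<bar> < \<epsilon>"
    if K: "finite K" "K \<subseteq> topspace X" and "\<epsilon> > 0" for K \<epsilon>
  proof -
    obtain m :: nat where m: "1 / \<epsilon> < real m"
      using reals_Archimedean2 by blast
    have r_less: "r n < \<epsilon>" if "m \<le> n" for n
    proof -
      have "1 / \<epsilon> < real (Suc n)"
        using m that by linarith
      then show ?thesis
        using \<open>\<epsilon> > 0\<close> by (simp add: r_def divide_less_eq mult.commute)
    qed
    have "finite (\<Union>x\<in>K. {n. x \<notin> \<Union>(\<F> n)})"
      using K eventually_covered by blast
    then obtain b where b: "\<forall>n\<in>(\<Union>x\<in>K. {n. x \<notin> \<Union>(\<F> n)}). n \<le> b"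
      unfolding finite_nat_set_iff_bounded_le ..
    have "\<exists>g\<in>F n. \<bar>g x - f x\<bar> < \<epsilon>" if n: "max m b < n" and "x \<in> K" for n x
    proof -
      have "x \<in> \<Union>(\<F> n)"
        using b n \<open>x \<in> K\<close> by fastforce
      then obtain g where "g \<in> F n" "\<bar>g x - f x\<bar> < r n"
        using F by (auto simp: near_set_def)
      moreover have "r n < \<epsilon>"
        using r_less n by simp
      ultimately show ?thesis
        by force
    qed
    then show ?thesis
      by blast
  qed
  with F show "\<exists>F. (\<forall>n. finite (F n) \<and> F n \<subseteq> S n) \<and>
           (\<forall>K \<epsilon>. finite K \<and> K \<subseteq> topspace X \<and> \<epsilon> > 0 \<longrightarrow>
              (\<exists>n'. \<forall>n > n'. \<forall>x\<in>K. \<exists>g\<in>F n. \<bar>g x - f x\<bar> < \<epsilon>))"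
    by (intro exI[of _ F]) blast
qed

theorem mainTheorem15:
  fixes X :: "'a topology"
  assumes "tychonoff_space X"
  shows "(\<forall>f\<in>Cfun X. Cp_Ufin_Gamma_f X f) \<longleftrightarrow> Ufin_GammaF_Gamma X"
proof
  assume "\<forall>f\<in>Cfun X. Cp_Ufin_Gamma_f X f"
  moreover have "(\<lambda>_. 0) \<in> Cfun X"
    by (simp add: Cfun_def)
  ultimately show "Ufin_GammaF_Gamma X"
    by (blast intro: Cp_Ufin_Gamma_f_imp_Ufin_GammaF_Gamma)
next
  assume "Ufin_GammaF_Gamma X"
  then show "\<forall>f\<in>Cfun X. Cp_Ufin_Gamma_f X f"
    by (blast intro: Ufin_GammaF_Gamma_imp_Cp_Ufin_Gamma_f)
qed

end
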